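(* Let $d>0$, $\mu>0$, $h_0>0$, let $J$ satisfy (J) and $\int_{-\infty}^0\int_0^{+\infty}J(x-y)\,dy\,dx<+\infty$, and let $f$ satisfy (f3). Let $c_0>0$ be the speed of the unique semi-wave pair described in the context. Let $(u,g,h)$ be the unique solution of problem (P) with initial data $u_0$ as in the context, and suppose spreading happens, i.e. $\lim_{t\to\infty}h(t)=-\lim_{t\to\infty}g(t)=\infty$ and $\lim_{t\to\infty}u(t,x)=1$ locally uniformly in $x\in\mathbb{R}$. Then $$\limsup_{t\to\infty}\frac{h(t)}{t}\le c_0.$$
   Context: Condition (J): $J\in C(\mathbb{R})\cap L^\infty(\mathbb{R})$, $J\ge 0$, $J(0)>0$, $\int_{\mathbb{R}}J=1$, $J$ even. Condition (f3): $f\in C^1([0,\infty))$, $f(0)=f(1)=0$, $f>0$ in $(0,1)$, $f'(0)>0>f'(1)$, $f(u)/u$ nonincreasing in $u>0$. Semi-wave pair: under these assumptions there is exactly one pair $(c_0,\phi)$ with $c_0>0$, $\phi\in C^1((-\infty,0])$ nonnegative and nonincreasing, such that $d\int_{-\infty}^0J(x-y)\phi(y)dy-d\phi(x)+c_0\phi'(x)+f(\phi(x))=0$ for $x<0$, $\phi(-\infty)=1$, $\phi(0)=0$, and $c_0=\mu\int_{-\infty}^0\int_0^{+\infty}J(x-y)\phi(x)\,dy\,dx$ (and $\phi$ is strictly decreasing). Problem (P): $u_0\in C([-h_0,h_0])$, $u_0(\pm h_0)=0$, $u_0>0$ in $(-h_0,h_0)$; $(u,g,h)$ satisfies $u_t=d\int_{g(t)}^{h(t)}J(x-y)u(t,y)dy-du+f(u)$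 for $t>0$, $g(t)<x<h(t)$; $u(t,g(t))=u(t,h(t))=0$; $h'(t)=\mu\int_{g(t)}^{h(t)}\int_{h(t)}^{\infty}J(x-y)u(t,x)dydx$; $g'(t)=-\mu\int_{g(t)}^{h(t)}\int_{-\infty}^{g(t)}J(x-y)u(t,x)dydx$; $u(0,\cdot)=u_0$, $h(0)=-g(0)=h_0$. It has a unique global solution. *)

theory Defs
  imports "HOL-Analysis.Analysis"
begin

definition kernel_J :: "(real \<Rightarrow> real) \<Rightarrow> bool" where
  "kernel_J J \<longleftrightarrow> continuous_on UNIV J \<and> bounded (range J) \<and> (\<forall>x. J x \<ge> 0) \<and> J 0 > 0
     \<and> J integrable_on UNIV \<and> integral UNIV J = 1 \<and> (\<forall>x. J (-x) = J x)"

definition cond_f3 :: "(real \<Rightarrow> real) \<Rightarrow> bool" where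
  "cond_f3 f \<longleftrightarrow> (\<exists>f'. continuous_on {0..} f' \<and>
       (\<forall>v\<ge>0. (f has_real_derivative f' v) (at v within {0..})) \<and> f' 0 > 0 \<and> f' 1 < 0)
     \<and> f 0 = 0 \<and> f 1 = 0 \<and> (\<forall>v. 0 < v \<and> v < 1 \<longrightarrow> f v > 0)
     \<and> (\<forall>v w. 0 < v \<and> v \<le> w \<longrightarrow> f w / w \<le> f v / v)"

definition semi_wave :: "real \<Rightarrow> real \<Rightarrow> (real \<Rightarrow> real) \<Rightarrow> (real \<Rightarrow> real) \<Rightarrow> real \<Rightarrow> (real \<Rightarrow> real) \<Rightarrow> bool" where
  "semi_wave d \<mu> J f c0 \<phi> \<longleftrightarrow> c0 > 0 \<and>
     (\<exists>\<phi>'. continuous_on {..0} \<phi>' \<and> (\<forall>x\<le>0. (\<phi> has_real_derivative \<phi>' x) (at x within {..0})) \<and>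
        (\<forall>x<0. d * integral {..0} (\<lambda>y. J (x - y) * \<phi> y) - d * \<phi> x + c0 * \<phi>' x + f (\<phi> x) = 0))
     \<and> (\<forall>x\<le>0. \<phi> x \<ge> 0) \<and> (\<forall>x y. x \<le> y \<and> y \<le> 0 \<longrightarrow> \<phi> y \<le> \<phi> x)
     \<and> (\<phi> \<longlongrightarrow> 1) at_bot \<and> \<phi> 0 = 0
     \<and> c0 = \<mu> * integral {..0} (\<lambda>x. integral {0..} (\<lambda>y. J (x - y)) * \<phi> x)"

definition init_data :: "real \<Rightarrow> (real \<Rightarrow> real) \<Rightarrow> bool" where
  "init_data h0 u0 \<longleftrightarrow> continuous_on {-h0..h0} u0 \<and> u0 (-h0) = 0 \<and> u0 h0 = 0
     \<and> (\<forall>x. -h0 < x \<and> x < h0 \<longrightarrow> u0 x > 0)"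

definition solves_P :: "real \<Rightarrow> real \<Rightarrow> (real \<Rightarrow> real) \<Rightarrow> (real \<Rightarrow> real) \<Rightarrow> real \<Rightarrow> (real \<Rightarrow> real)
      \<Rightarrow> (real \<Rightarrow> real \<Rightarrow> real) \<Rightarrow> (real \<Rightarrow> real) \<Rightarrow> (real \<Rightarrow> real) \<Rightarrow> bool" where
  "solves_P d \<mu> J f h0 u0 u g h \<longleftrightarrow>
     continuous_on {0..} g \<and> continuous_on {0..} h \<and> (\<forall>t\<ge>0. g t < h t)
     \<and> continuous_on {(t, x). t \<ge> 0 \<and> g t \<le> x \<and> x \<le> h t} (\<lambda>(t, x). u t x)
     \<and> (\<forall>t>0. \<forall>x. g t < x \<and> x < h t \<longrightarrow>
          ((\<lambda>s. u s x) has_real_derivative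
             (d * integral {g t..h t} (\<lambda>y. J (x - y) * u t y) - d * u t x + f (u t x))) (at t))
     \<and> (\<forall>t\<ge>0. u t (g t) = 0 \<and> u t (h t) = 0)
     \<and> (\<forall>t>0. (h has_real_derivative
             (\<mu> * integral {g t..h t} (\<lambda>x. integral {h t..} (\<lambda>y. J (x - y)) * u t x))) (at t))
     \<and> (\<forall>t>0. (g has_real_derivative
             (- \<mu> * integral {g t..h t} (\<lambda>x. integral {..g t} (\<lambda>y. J (x - y)) * u t x))) (at t))
     \<and> (\<forall>x\<in>{-h0..h0}. u 0 x = u0 x) \<and> h 0 = h0 \<and> g 0 = - h0"

definition spreading :: "(real \<Rightarrow> real \<Rightarrow> real) \<Rightarrow> (real \<Rightarrow> real) \<Rightarrow> (real \<Rightarrow> real) \<Rightarrow> bool" where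
  "spreading u g h \<longleftrightarrow> filterlim h at_top at_top \<and> filterlim g at_bot at_top
     \<and> (\<forall>L>0. \<forall>e>0. eventually (\<lambda>t. \<forall>x\<in>{-L..L}. \<bar>u t x - 1\<bar> < e) at_top)"

end

theory Submission
  imports Defs
begin

(* For rho > 1 the function rho + M exp(f(rho)/rho t) is a supersolution, so u eventually
   stays below any theta > 1. Fix 1 < K < kappa. Since f(K p) <= K f(p) by (f3) and phi' <= 0,
   the function K phi(x - C - kappa c0 t) is a supersolution as long as the free boundary h
   stays left of the line x = C + kappa c0 t, and for large C it lies above u at the time from
   which u <= theta. At a first time h reaches the line, u <= K phi(x - h), so the Stefan
   condition and c0 = mu int_{x<0} int_{y>0} J(x - y) phi(x) give h' <= K c0 < kappa c0,
   contradicting the contact. Hence h(t) < C + kappa c0 t for large t, for every kappa > 1.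

   The comparisons rest on a maximum principle on the moving interval [g(t), h(t)]: at a first
   negative spatial minimum of w = V - u, the nonlocal term and the Lipschitz bound of f give
   w_t >= -L |w|, which an exponential weight turns into a contradiction. *)

section \<open>The kernel and the reaction term\<close>

lemma has_integral_real_affine_UNIV:
  fixes f :: "real \<Rightarrow> real"
  assumes f: "f absolutely_integrable_on UNIV" and c: "c \<noteq> 0"
  shows "((\<lambda>x. f (t + c * x)) has_integral integral UNIV f / \<bar>c\<bar>) UNIV"
    and "(\<lambda>x. f (t + c * x)) absolutely_integrable_on UNIV"
proof -
  have i: "integrable lebesgue f" using f by (simp add: set_integrable_def)
  have i2: "integrable lebesgue (\<lambda>x. f (t + c * x))"
    using lebesgue_integrable_real_affine[OF i c] .
  have "integral UNIV f = integral\<^sup>L lebesgue f"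
    using has_integral_integral_lebesgue[OF i] by (simp add: integral_unique)
  also have "\<dots> = \<bar>c\<bar> * integral\<^sup>L lebesgue (\<lambda>x. f (t + c * x))"
    using lebesgue_integral_real_affine[OF c, of f t] by simp
  finally show "((\<lambda>x. f (t + c * x)) has_integral integral UNIV f / \<bar>c\<bar>) UNIV"
    using has_integral_integral_lebesgue[OF i2] c by simp
  show "(\<lambda>x. f (t + c * x)) absolutely_integrable_on UNIV"
    using i2 by (simp add: set_integrable_def)
qed

lemma kernel_J_nonneg: "kernel_J J \<Longrightarrow> 0 \<le> J x"
  by (simp add: kernel_J_def)

lemma kernel_J_continuous: "kernel_J J \<Longrightarrow> continuous_on S J"
  by (auto simp: kernel_J_def intro: continuous_on_subset)

lemma kernel_J_reflected_has_integral:
  assumes "kernel_J J"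
  shows "((\<lambda>y. J (x - y)) has_integral 1) UNIV"
proof -
  have "J absolutely_integrable_on UNIV"
    using assms by (auto simp: kernel_J_def intro: nonnegative_absolutely_integrable_1)
  from has_integral_real_affine_UNIV(1)[OF this, of "-1" x] show ?thesis
    using assms by (simp add: kernel_J_def)
qed

lemma kernel_J_reflected_absolutely_integrable:
  assumes "kernel_J J" "S \<in> sets lebesgue"
  shows "(\<lambda>y. J (x - y)) absolutely_integrable_on S"
proof -
  have "(\<lambda>y. J (x - y)) absolutely_integrable_on UNIV"
    using kernel_J_reflected_has_integral[OF assms(1)] kernel_J_nonneg[OF assms(1)]
    by (intro nonnegative_absolutely_integrable_1) auto
  then show ?thesis using set_integrable_subset assms(2) by blast
qed

lemma kernel_J_reflected_integral_nonneg:
  "kernel_J J \<Longrightarrow> 0 \<le> integral S (\<lambda>y. J (x - y))"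
  by (metis integral_nonneg kernel_J_nonneg not_integrable_integral order_refl)

lemma kernel_J_reflected_integral_Icc_le_1:
  assumes "kernel_J J"
  shows "integral {a..b} (\<lambda>y. J (x - y)) \<le> 1"
proof -
  have "integral {a..b} (\<lambda>y. J (x - y)) \<le> integral UNIV (\<lambda>y. J (x - y))"
    using kernel_J_reflected_absolutely_integrable[OF assms, of "{a..b}"]
      kernel_J_reflected_has_integral[OF assms] kernel_J_nonneg[OF assms]
    by (intro integral_subset_le) (auto dest: set_lebesgue_integral_eq_integral(1))
  then show ?thesis
    using integral_unique[OF kernel_J_reflected_has_integral[OF assms]] by simp
qed

lemma kernel_J_tail_integral_shift:
  assumes "kernel_J J"
  shows "integral {c..} (\<lambda>y. J (x - y)) = integral {0..} (\<lambda>z. J (x - c - z))"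
proof -
  define F where "F y = (if y \<in> {c..} then J (x - y) else 0)" for y
  have "F absolutely_integrable_on UNIV"
    unfolding F_def absolutely_integrable_restrict_UNIV
    by (rule kernel_J_reflected_absolutely_integrable[OF assms]) simp
  moreover have "(\<lambda>z. F (c + 1 * z)) = (\<lambda>z. if z \<in> {0..} then J (x - c - z) else 0)"
    by (rule ext) (simp add: F_def algebra_simps)
  ultimately have "((\<lambda>z. if z \<in> {0..} then J (x - c - z) else 0) has_integral integral UNIV F) UNIV"
    using has_integral_real_affine_UNIV(1)[of F 1 c] by simp
  then have "((\<lambda>z. J (x - c - z)) has_integral integral {c..} (\<lambda>y. J (x - y))) {0..}"
    unfolding has_integral_restrict_UNIV F_def integral_restrict_UNIV .
  then show ?thesis by (rule integral_unique[symmetric])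
qed

lemma kernel_J_convolution_Icc_diff_lower_bound:
  assumes J: "kernel_J J" and v: "continuous_on {a..b} v" and w: "continuous_on {a..b} w"
    and lower: "\<And>y. y \<in> {a..b} \<Longrightarrow> -m \<le> v y - w y" and m: "0 \<le> m"
  shows "-m \<le> integral {a..b} (\<lambda>y. J (x - y) * v y) - integral {a..b} (\<lambda>y. J (x - y) * w y)"
proof -
  have cJ: "continuous_on {a..b} (\<lambda>y. J (x - y))"
    by (intro continuous_on_compose2[OF kernel_J_continuous[OF J, of UNIV]] continuous_intros) auto
  have "-m \<le> -m * integral {a..b} (\<lambda>y. J (x - y))"
    using kernel_J_reflected_integral_Icc_le_1[OF J, of a b x] m by (simp add: mult_left_le)
  also have "\<dots> = integral {a..b} (\<lambda>y. J (x - y) * -m)"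
    by (simp add: mult.commute)
  also have "\<dots> \<le> integral {a..b} (\<lambda>y. J (x - y) * v y - J (x - y) * w y)"
  proof (rule integral_le)
    show "J (x - y) * -m \<le> J (x - y) * v y - J (x - y) * w y" if "y \<in> {a..b}" for y
      using mult_left_mono[OF lower[OF that] kernel_J_nonneg[OF J]] by (simp add: right_diff_distrib)
  qed (intro integrable_continuous_interval continuous_intros cJ v w)+
  also have "\<dots> = integral {a..b} (\<lambda>y. J (x - y) * v y) - integral {a..b} (\<lambda>y. J (x - y) * w y)"
    by (intro integral_diff integrable_continuous_interval continuous_intros cJ v w)
  finally show ?thesis .
qed

lemma cond_f3_lipschitz_on:
  assumes "cond_f3 f"
  obtains L where "L-lipschitz_on {0..B} f"
proof -
  obtain f' where cf: "continuous_on {0..} f'"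
    and df: "\<And>v. v \<ge> 0 \<Longrightarrow> (f has_real_derivative f' v) (at v within {0..})"
    using assms unfolding cond_f3_def by blast
  have "compact (f' ` {0..B})"
    by (rule compact_continuous_image) (auto intro: continuous_on_subset[OF cf])
  then obtain M where M: "\<And>v. v \<in> {0..B} \<Longrightarrow> norm (f' v) \<le> M"
    using compact_imp_bounded bounded_iff by (metis imageI)
  have "norm (f x - f y) \<le> max M 0 * norm (x - y)" if "x \<in> {0..B}" "y \<in> {0..B}" for x y
  proof (rule field_differentiable_bound[of "{0..B}"])
    show "(f has_field_derivative f' z) (at z within {0..B})" if "z \<in> {0..B}" for z
      using df[of z] that by (auto intro: has_field_derivative_subset)
    show "norm (f' z) \<le> max M 0" if "z \<in> {0..B}" for z
      using M[OF that] by simp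
  qed (use that in auto)
  then have "(max M 0)-lipschitz_on {0..B} f"
    by (intro lipschitz_onI) (auto simp: dist_norm)
  then show thesis by (rule that)
qed

lemma cond_f3_le_linear:
  assumes "cond_f3 f" "0 < v" "v \<le> w"
  shows "f w \<le> f v / v * w"
proof -
  have "f w / w \<le> f v / v" using assms unfolding cond_f3_def by blast
  then show ?thesis using assms by (simp add: divide_simps)
qed

lemma cond_f3_scale_le:
  assumes "cond_f3 f" "0 \<le> p" "1 \<le> K"
  shows "f (K * p) \<le> K * f p"
proof (cases "p = 0")
  case True
  then show ?thesis using assms unfolding cond_f3_def by simp
next
  case False
  then have "f (K * p) \<le> f p / p * (K * p)"
    using assms by (intro cond_f3_le_linear) (auto intro: mult_right_mono[of 1 K p, simplified])
  then show ?thesis using False by (simp add: mult.commute)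
qed

lemma cond_f3_neg_above_1:
  assumes "cond_f3 f" "1 < v"
  shows "f v < 0"
proof -
  obtain f' where df: "(f has_real_derivative f' 1) (at 1 within {0..})" and f'1: "f' 1 < 0"
    and f1: "f 1 = 0"
    using assms unfolding cond_f3_def by (meson order.refl zero_le_one)
  have "at (1::real) within {0..} = at 1"
    by (intro at_within_interior) simp
  with df have "(f has_real_derivative f' 1) (at 1)" by simp
  from DERIV_neg_dec_right[OF this f'1] obtain e where
    e: "e > 0" "\<And>s. s > 0 \<Longrightarrow> s < e \<Longrightarrow> f (1 + s) < f 1"
    by blast
  define s where "s = min (e / 2) (v - 1)"
  have s: "0 < s" "s < e" "1 + s \<le> v" using e assms by (auto simp: s_def)
  have "f v \<le> f (1 + s) / (1 + s) * v"
    using cond_f3_le_linear[OF assms(1), of "1 + s" v] s by simp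
  also have "\<dots> < 0"
    using e(2)[OF s(1,2)] f1 s assms by (simp add: mult_neg_pos divide_neg_pos)
  finally show ?thesis .
qed

section \<open>A maximum principle on a moving interval\<close>

lemma DERIV_at_left_crossing:
  fixes F :: "real \<Rightarrow> real"
  assumes F': "(F has_real_derivative F') (at t)" and "F t \<le> 0"
    and pos: "eventually (\<lambda>s. 0 < F s) (at_left t)"
  shows "F t = 0" and "F' \<le> 0"
proof -
  have "(F \<longlongrightarrow> F t) (at_left t)"
    using DERIV_isCont[OF F'] by (auto simp: isCont_def intro: tendsto_mono[OF at_le])
  then have "0 \<le> F t"
    using pos by (intro tendsto_lowerbound) (auto elim: eventually_mono)
  with \<open>F t \<le> 0\<close> show "F t = 0" by simp
  show "F' \<le> 0"
  proof (rule ccontr)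
    assume "\<not> F' \<le> 0"
    from DERIV_pos_inc_left[OF F'] this obtain e where
      e: "e > 0" "\<And>s. 0 < s \<Longrightarrow> s < e \<Longrightarrow> F (t - s) < F t"
      by auto
    have "F s < 0" if "t - e < s" "s < t" for s
      using e(2)[of "t - s"] that \<open>F t = 0\<close> by simp
    then have "eventually (\<lambda>s. F s < 0) (at_left t)"
      using eventually_at_left_real[of "t - e" t] e(1) by (auto elim!: eventually_mono)
    with pos have "eventually (\<lambda>_. False) (at_left t)"
      by eventually_elim auto
    then show False by simp
  qed
qed

lemma negative_if_DERIV_negative_at_first_zero:
  fixes r :: "real \<Rightarrow> real"
  assumes cont: "continuous_on {T..} r" and start: "r T < 0"
    and first_zero: "\<And>t. T < t \<Longrightarrow> r t = 0 \<Longrightarrow> (\<And>s. T \<le> s \<Longrightarrow> s < t \<Longrightarrow> r s < 0)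
        \<Longrightarrow> \<exists>r'. (r has_real_derivative r') (at t) \<and> r' < 0"
    and t: "T \<le> t"
  shows "r t < 0"
proof (rule ccontr)
  assume "\<not> r t < 0"
  define S where "S = {s \<in> {T..t}. 0 \<le> r s}"
  have "closed S"
    unfolding S_def
    by (intro continuous_on_closed_Collect_le continuous_on_const continuous_on_subset[OF cont]) auto
  have "t \<in> S"
    using t \<open>\<not> r t < 0\<close> by (simp add: S_def)
  have "bdd_below S"
    by (rule bdd_belowI[of _ T]) (simp add: S_def)
  define t1 where "t1 = Inf S"
  have "t1 \<in> S"
    unfolding t1_def using \<open>t \<in> S\<close> \<open>bdd_below S\<close> \<open>closed S\<close> by (intro closed_contains_Inf) auto
  then have "T \<le> t1" "0 \<le> r t1"
    by (auto simp: S_def)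
  with start have "T < t1"
    by (metis less_le not_le)
  have before: "r s < 0" if "T \<le> s" "s < t1" for s
  proof (rule ccontr)
    assume "\<not> r s < 0"
    with that \<open>t1 \<in> S\<close> have "s \<in> S"
      by (auto simp: S_def)
    then have "t1 \<le> s"
      unfolding t1_def using \<open>bdd_below S\<close> by (rule cInf_lower)
    with that show False by simp
  qed
  have "(r \<longlongrightarrow> r t1) (at_left t1)"
    using \<open>T < t1\<close> by (intro continuous_on_Icc_at_leftD continuous_on_subset[OF cont]) auto
  moreover have "eventually (\<lambda>s. r s \<le> 0) (at_left t1)"
    using eventually_at_left_real[OF \<open>T < t1\<close>] by (rule eventually_mono) (simp add: before less_imp_le)
  ultimately have "r t1 \<le> 0"
    by (rule tendsto_upperbound) simp
  with \<open>0 \<le> r t1\<close> have "r t1 = 0"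
    by simp
  then obtain r' where r': "(r has_real_derivative r') (at t1)" "r' < 0"
    using first_zero[OF \<open>T < t1\<close> _ before] by blast
  have "eventually (\<lambda>s. 0 < - r s) (at_left t1)"
    using eventually_at_left_real[OF \<open>T < t1\<close>] by (rule eventually_mono) (simp add: before)
  from DERIV_at_left_crossing(2)[OF DERIV_minus[OF r'(1)] _ this] show False
    using \<open>r t1 = 0\<close> r'(2) by simp
qed

definition between_graphs :: "real \<Rightarrow> real \<Rightarrow> (real \<Rightarrow> real) \<Rightarrow> (real \<Rightarrow> real) \<Rightarrow> (real \<times> real) set"
  where "between_graphs T0 T1 g h = {(t, x). T0 \<le> t \<and> t \<le> T1 \<and> g t \<le> x \<and> x \<le> h t}"

lemma compact_between_graphs:
  assumes cg: "continuous_on {T0..T1} g" and ch: "continuous_on {T0..T1} h"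
  shows "compact (between_graphs T0 T1 g h)"
  unfolding compact_eq_bounded_closed
proof (rule conjI[rotated])
  let ?P = "{T0..T1} \<times> (UNIV :: real set)"
  have "continuous_on ?P (\<lambda>p. g (fst p))" "continuous_on ?P (\<lambda>p. h (fst p))"
    by (auto intro!: continuous_on_compose2[OF cg] continuous_on_compose2[OF ch] continuous_intros)
  then have "closed {p \<in> ?P. g (fst p) \<le> snd p}" "closed {p \<in> ?P. snd p \<le> h (fst p)}"
    by (auto intro!: continuous_on_closed_Collect_le continuous_intros closed_Times)
  moreover have "between_graphs T0 T1 g h = {p \<in> ?P. g (fst p) \<le> snd p} \<inter> {p \<in> ?P. snd p \<le> h (fst p)}"
    by (auto simp: between_graphs_def)
  ultimately show "closed (between_graphs T0 T1 g h)" by auto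
  obtain Bg Bh where "\<And>t. t \<in> {T0..T1} \<Longrightarrow> \<bar>g t\<bar> \<le> Bg" "\<And>t. t \<in> {T0..T1} \<Longrightarrow> \<bar>h t\<bar> \<le> Bh"
    using compact_imp_bounded[OF compact_continuous_image[OF cg]]
      compact_imp_bounded[OF compact_continuous_image[OF ch]]
    by (auto simp: bounded_iff) (metis atLeastAtMost_iff)
  then have "between_graphs T0 T1 g h \<subseteq> {T0..T1} \<times> {-Bg..Bh}"
    by (fastforce simp: between_graphs_def abs_le_iff)
  then show "bounded (between_graphs T0 T1 g h)"
    by (rule bounded_subset[OF bounded_Times[OF bounded_closed_interval bounded_closed_interval]])
qed

lemma continuous_on_between_graphs_slice:
  assumes "continuous_on (between_graphs T0 T1 g h) (\<lambda>(t, x). w t x)" "T0 \<le> t" "t \<le> T1"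
  shows "continuous_on {g t..h t} (w t)"
proof -
  have "continuous_on {g t..h t} ((\<lambda>(t, x). w t x) \<circ> Pair t)"
    by (rule continuous_on_compose[OF _ continuous_on_subset[OF assms(1)]])
      (use assms(2,3) in \<open>auto intro: continuous_intros simp: between_graphs_def\<close>)
  then show ?thesis by (simp add: o_def)
qed

lemma eventually_at_left_in_between_graphs:
  assumes cg: "continuous_on {T0..T1} g" and ch: "continuous_on {T0..T1} h"
    and t: "T0 < t" "t \<le> T1" and x: "g t < x" "x < h t"
  shows "eventually (\<lambda>s. (s, x) \<in> between_graphs T0 T1 g h) (at_left t)"
proof -
  have "(g \<longlongrightarrow> g t) (at_left t)" "(h \<longlongrightarrow> h t) (at_left t)"
    using t by (auto intro!: continuous_on_Icc_at_leftD continuous_on_subset[OF cg]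
        continuous_on_subset[OF ch])
  then have "eventually (\<lambda>s. g s < x) (at_left t)" "eventually (\<lambda>s. x < h s) (at_left t)"
    using x by (auto intro: order_tendstoD)
  moreover have "eventually (\<lambda>s. s \<in> {T0<..<t}) (at_left t)"
    using eventually_at_left_real[OF t(1)] .
  ultimately show ?thesis
    by eventually_elim (use t(2) in \<open>auto simp: between_graphs_def\<close>)
qed

lemma compact_earliest_nonpos:
  fixes F :: "real \<Rightarrow> real \<Rightarrow> real"
  assumes "compact D" "continuous_on D (\<lambda>(s, y). F s y)" "(t, x) \<in> D" "F t x \<le> 0"
  obtains ts x where "(ts, x) \<in> D" "F ts x \<le> 0" "\<And>s y. (s, y) \<in> D \<Longrightarrow> s < ts \<Longrightarrow> 0 < F s y"
proof -
  define S where "S = {p \<in> D. case_prod F p \<le> 0}"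
  have "closed S"
    unfolding S_def using assms(1,2)
    by (intro continuous_on_closed_Collect_le continuous_on_const compact_imp_closed)
  then have "compact (D \<inter> S)"
    using assms(1) by (rule compact_Int_closed[rotated])
  moreover have "D \<inter> S = S"
    by (auto simp: S_def)
  ultimately have "compact S"
    by simp
  then have "compact (fst ` S)"
    by (intro compact_continuous_image continuous_intros)
  moreover have "t \<in> fst ` S"
    using assms(3,4) by (force simp: S_def)
  ultimately obtain ts where ts: "ts \<in> fst ` S" and least: "\<And>s. s \<in> fst ` S \<Longrightarrow> ts \<le> s"
    using compact_attains_inf by (metis empty_iff)
  from ts obtain x where "(ts, x) \<in> S"
    by force
  moreover have "0 < F s y" if "(s, y) \<in> D" "s < ts" for s y
    using least[of s] that by (force simp: S_def)
  ultimately show thesis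
    by (intro that[of ts x]) (auto simp: S_def)
qed

lemma between_graphs_first_nonpos:
  fixes W :: "real \<Rightarrow> real \<Rightarrow> real"
  assumes cg: "continuous_on {T0..T1} g" and ch: "continuous_on {T0..T1} h"
    and cW: "continuous_on (between_graphs T0 T1 g h) (\<lambda>(t, x). W t x)"
    and initial: "\<And>x. g T0 \<le> x \<Longrightarrow> x \<le> h T0 \<Longrightarrow> 0 < W T0 x"
    and lateral: "\<And>t. T0 \<le> t \<Longrightarrow> t \<le> T1 \<Longrightarrow> 0 < W t (g t) \<and> 0 < W t (h t)"
    and tx: "(t, x) \<in> between_graphs T0 T1 g h" "W t x \<le> 0"
  obtains ts xs where "T0 < ts" "ts \<le> T1" "g ts < xs" "xs < h ts" "W ts xs \<le> 0"
    "\<And>y. g ts \<le> y \<Longrightarrow> y \<le> h ts \<Longrightarrow> W ts xs \<le> W ts y"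
    "eventually (\<lambda>s. 0 < W s xs) (at_left ts)"
proof -
  let ?D = "between_graphs T0 T1 g h"
  obtain ts x1 where ts: "(ts, x1) \<in> ?D" "W ts x1 \<le> 0"
    and earlier: "\<And>s y. (s, y) \<in> ?D \<Longrightarrow> s < ts \<Longrightarrow> 0 < W s y"
    by (rule compact_earliest_nonpos[OF compact_between_graphs[OF cg ch] cW tx]) blast
  have "T0 \<le> ts" "ts \<le> T1" "g ts \<le> x1" "x1 \<le> h ts"
    using ts(1) by (auto simp: between_graphs_def)
  moreover have "ts \<noteq> T0"
    using initial[of x1] ts(2) \<open>g ts \<le> x1\<close> \<open>x1 \<le> h ts\<close> by force
  ultimately have "T0 < ts" by simp
  have "continuous_on {g ts..h ts} (W ts)"
    by (rule continuous_on_between_graphs_slice[OF cW \<open>T0 \<le> ts\<close> \<open>ts \<le> T1\<close>])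
  moreover have "{g ts..h ts} \<noteq> {}"
    using \<open>g ts \<le> x1\<close> \<open>x1 \<le> h ts\<close> by auto
  ultimately obtain xs where xs: "xs \<in> {g ts..h ts}" and min: "\<And>y. y \<in> {g ts..h ts} \<Longrightarrow> W ts xs \<le> W ts y"
    using continuous_attains_inf[OF compact_Icc] by blast
  have "W ts xs \<le> 0"
    using min[of x1] ts(2) \<open>g ts \<le> x1\<close> \<open>x1 \<le> h ts\<close> by simp
  with lateral[OF \<open>T0 \<le> ts\<close> \<open>ts \<le> T1\<close>] have "xs \<noteq> g ts" "xs \<noteq> h ts"
    by auto
  with xs have inner: "g ts < xs" "xs < h ts"
    by auto
  have "eventually (\<lambda>s. 0 < W s xs) (at_left ts)"
    using eventually_at_left_in_between_graphs[OF cg ch \<open>T0 < ts\<close> \<open>ts \<le> T1\<close> inner]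
      eventually_at_left_real[OF \<open>T0 < ts\<close>]
    by eventually_elim (simp add: earlier)
  with \<open>T0 < ts\<close> \<open>ts \<le> T1\<close> inner \<open>W ts xs \<le> 0\<close> min show thesis
    by (intro that) auto
qed

lemma nonneg_between_graphs:
  fixes g h :: "real \<Rightarrow> real" and w :: "real \<Rightarrow> real \<Rightarrow> real"
  assumes cg: "continuous_on {T0..T1} g" and ch: "continuous_on {T0..T1} h"
    and cw: "continuous_on (between_graphs T0 T1 g h) (\<lambda>(t, x). w t x)"
    and initial: "\<And>x. g T0 \<le> x \<Longrightarrow> x \<le> h T0 \<Longrightarrow> 0 \<le> w T0 x"
    and lateral: "\<And>t. T0 \<le> t \<Longrightarrow> t \<le> T1 \<Longrightarrow> 0 \<le> w t (g t) \<and> 0 \<le> w t (h t)"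
    and L: "0 \<le> L"
    and at_min: "\<And>t x a. T0 < t \<Longrightarrow> t \<le> T1 \<Longrightarrow> g t < x \<Longrightarrow> x < h t \<Longrightarrow> 0 < a \<Longrightarrow> w t x = -a
      \<Longrightarrow> (\<And>y. g t \<le> y \<Longrightarrow> y \<le> h t \<Longrightarrow> -a \<le> w t y)
      \<Longrightarrow> \<exists>w'. ((\<lambda>s. w s x) has_real_derivative w') (at t) \<and> -L * a \<le> w'"
    and tx: "(t, x) \<in> between_graphs T0 T1 g h"
  shows "0 \<le> w t x"
proof (rule ccontr)
  assume "\<not> 0 \<le> w t x"
  \<comment> \<open>The weight grows at rate \<open>L + 1\<close>, faster than \<open>at_min\<close> lets \<open>w\<close> decrease.\<close>
  define E where "E s = - w t x * exp ((L + 1) * (s - t))" for s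
  have E_pos: "0 < E s" for s
    using \<open>\<not> 0 \<le> w t x\<close> by (simp add: E_def mult_neg_pos)
  have E': "(E has_real_derivative (L + 1) * E s) (at s)" for s
    unfolding E_def by (auto intro!: derivative_eq_intros)
  define W where "W s y = w s y + E s" for s y
  have cW: "continuous_on (between_graphs T0 T1 g h) (\<lambda>(s, y). W s y)"
    using cw unfolding W_def E_def case_prod_unfold by (intro continuous_intros)
  obtain ts xs where ts: "T0 < ts" "ts \<le> T1" and xs: "g ts < xs" "xs < h ts"
    and "W ts xs \<le> 0" and min: "\<And>y. g ts \<le> y \<Longrightarrow> y \<le> h ts \<Longrightarrow> W ts xs \<le> W ts y"
    and before: "eventually (\<lambda>s. 0 < W s xs) (at_left ts)"
  proof (rule between_graphs_first_nonpos[OF cg ch cW _ _ tx])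
    show "0 < W T0 y" if "g T0 \<le> y" "y \<le> h T0" for y
      using initial[OF that] E_pos[of T0] by (simp add: W_def)
    show "0 < W s (g s) \<and> 0 < W s (h s)" if "T0 \<le> s" "s \<le> T1" for s
      using lateral[OF that] E_pos[of s] by (simp add: W_def)
    show "W t x \<le> 0"
      by (simp add: W_def E_def)
  qed blast
  define a where "a = E ts - W ts xs"
  have "0 < a"
    using E_pos[of ts] \<open>W ts xs \<le> 0\<close> unfolding a_def by linarith
  moreover have "w ts xs = -a"
    by (simp add: a_def W_def)
  moreover have "-a \<le> w ts y" if "g ts \<le> y" "y \<le> h ts" for y
    using min[OF that] by (simp add: a_def W_def)
  ultimately obtain w' where w': "((\<lambda>s. w s xs) has_real_derivative w') (at ts)" "-L * a \<le> w'"
    using at_min[OF ts xs] by blast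
  have "((\<lambda>s. W s xs) has_real_derivative w' + (L + 1) * E ts) (at ts)"
    unfolding W_def by (intro DERIV_add w'(1) E')
  from DERIV_at_left_crossing[OF this \<open>W ts xs \<le> 0\<close> before]
  have "W ts xs = 0" "w' + (L + 1) * E ts \<le> 0" .
  then show False
    using w'(2) E_pos[of ts] L by (simp add: a_def algebra_simps)
qed

section \<open>The semi-wave\<close>

locale semi_wave_setting =
  fixes d \<mu> c0 :: real and J f \<phi> :: "real \<Rightarrow> real"
  assumes d_pos: "0 < d" and \<mu>_pos: "0 < \<mu>"
    and kernel: "kernel_J J"
    and tail_integrable: "(\<lambda>x. integral {0..} (\<lambda>y. J (x - y))) integrable_on {..0}"
    and reaction: "cond_f3 f"
    and semi_wave: "semi_wave d \<mu> J f c0 \<phi>"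
begin

lemma c0_pos: "0 < c0"
  and phi_nonneg: "x \<le> 0 \<Longrightarrow> 0 \<le> \<phi> x"
  and phi_antimono: "x \<le> y \<Longrightarrow> y \<le> 0 \<Longrightarrow> \<phi> y \<le> \<phi> x"
  and phi_tendsto_1: "(\<phi> \<longlongrightarrow> 1) at_bot"
  and c0_eq: "c0 = \<mu> * integral {..0} (\<lambda>x. integral {0..} (\<lambda>y. J (x - y)) * \<phi> x)"
  using semi_wave unfolding semi_wave_def by auto

lemma phi_le_1: "x \<le> 0 \<Longrightarrow> \<phi> x \<le> 1"
  using phi_antimono by (intro tendsto_lowerbound[OF phi_tendsto_1])
    (auto simp: eventually_at_bot_linorder)

lemma phi_deriv_within: obtains \<phi>' where
  "\<And>x. x \<le> 0 \<Longrightarrow> (\<phi> has_real_derivative \<phi>' x) (at x within {..0})"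
  "\<And>x. x < 0 \<Longrightarrow> d * integral {..0} (\<lambda>y. J (x - y) * \<phi> y) - d * \<phi> x + c0 * \<phi>' x + f (\<phi> x) = 0"
  using semi_wave unfolding semi_wave_def by blast

lemma continuous_on_phi: "continuous_on {..0} \<phi>"
  using phi_deriv_within by (metis DERIV_continuous_on atMost_iff)

lemma phi_has_deriv:
  assumes "x < 0"
  shows "(\<phi> has_real_derivative deriv \<phi> x) (at x)"
  and "d * integral {..0} (\<lambda>y. J (x - y) * \<phi> y) - d * \<phi> x + c0 * deriv \<phi> x + f (\<phi> x) = 0"
proof -
  obtain \<phi>' where \<phi>': "(\<phi> has_real_derivative \<phi>' x) (at x within {..0})"
    "d * integral {..0} (\<lambda>y. J (x - y) * \<phi> y) - d * \<phi> x + c0 * \<phi>' x + f (\<phi> x) = 0"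
    using phi_deriv_within assms by (metis less_imp_le)
  have "at x within {..0} = at x"
    using assms by (intro at_within_interior) auto
  with \<phi>'(1) have "(\<phi> has_real_derivative \<phi>' x) (at x)"
    by simp
  with \<phi>'(2) show "(\<phi> has_real_derivative deriv \<phi> x) (at x)"
    and "d * integral {..0} (\<lambda>y. J (x - y) * \<phi> y) - d * \<phi> x + c0 * deriv \<phi> x + f (\<phi> x) = 0"
    by (simp_all add: DERIV_imp_deriv)
qed

lemma phi_deriv_nonpos:
  assumes "x < 0"
  shows "deriv \<phi> x \<le> 0"
proof (rule ccontr)
  assume "\<not> deriv \<phi> x \<le> 0"
  from DERIV_pos_inc_right[OF phi_has_deriv(1)[OF assms]] this obtain e where
    e: "e > 0" "\<And>s. 0 < s \<Longrightarrow> s < e \<Longrightarrow> \<phi> x < \<phi> (x + s)"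
    by auto
  define s where "s = min (e / 2) (- x)"
  have "0 < s" "s < e" "x + s \<le> 0"
    using e assms by (auto simp: s_def)
  then show False
    using e(2)[of s] phi_antimono[of x "x + s"] by auto
qed

lemma phi_measurable:
  "S \<subseteq> {..0} \<Longrightarrow> S \<in> sets lebesgue \<Longrightarrow> \<phi> \<in> borel_measurable (lebesgue_on S)"
  by (rule continuous_imp_measurable_on_sets_lebesgue) (auto intro: continuous_on_subset[OF continuous_on_phi])

lemma bounded_phi: "S \<subseteq> {..0} \<Longrightarrow> bounded (\<phi> ` S)"
  unfolding bounded_iff using phi_nonneg phi_le_1 by (intro exI[of _ 1]) force

lemma phi_convolution_absolutely_integrable:
  "(\<lambda>y. J (x - y) * \<phi> y) absolutely_integrable_on {..0}"
  using absolutely_integrable_bounded_measurable_product_real[OF phi_measurable _ bounded_phi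
      kernel_J_reflected_absolutely_integrable[OF kernel]]
  by (simp add: mult.commute)

lemma phi_convolution_Icc_le:
  assumes "b \<le> 0"
  shows "integral {a..b} (\<lambda>y. J (x - y) * \<phi> y) \<le> integral {..0} (\<lambda>y. J (x - y) * \<phi> y)"
proof (rule integral_subset_le)
  show "(\<lambda>y. J (x - y) * \<phi> y) integrable_on {a..b}"
    using assms by (intro set_lebesgue_integral_eq_integral(1)
        set_integrable_subset[OF phi_convolution_absolutely_integrable]) auto
qed (use assms phi_convolution_absolutely_integrable phi_nonneg kernel_J_nonneg[OF kernel] in
    \<open>auto dest: set_lebesgue_integral_eq_integral(1)\<close>)

lemma scaled_semi_wave_supersolution:
  assumes "1 \<le> K" "c0 \<le> k" "\<xi> < 0" and P: "P \<le> integral {..0} (\<lambda>y. J (\<xi> - y) * \<phi> y)"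
  shows "d * (K * P) - d * (K * \<phi> \<xi>) + f (K * \<phi> \<xi>) \<le> K * (deriv \<phi> \<xi> * - k)"
proof -
  let ?I = "integral {..0} (\<lambda>y. J (\<xi> - y) * \<phi> y)"
  have "d * (K * P) \<le> d * (K * ?I)"
    using P d_pos assms(1) by (intro mult_left_mono) auto
  moreover have "f (K * \<phi> \<xi>) \<le> K * f (\<phi> \<xi>)"
    using cond_f3_scale_le[OF reaction phi_nonneg \<open>1 \<le> K\<close>] assms(3) by simp
  moreover have "K * (d * ?I - d * \<phi> \<xi> + f (\<phi> \<xi>)) = d * (K * ?I) - d * (K * \<phi> \<xi>) + K * f (\<phi> \<xi>)"
    by (simp add: algebra_simps)
  ultimately have "d * (K * P) - d * (K * \<phi> \<xi>) + f (K * \<phi> \<xi>) \<le> K * (d * ?I - d * \<phi> \<xi> + f (\<phi> \<xi>))"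
    by linarith
  also have "\<dots> = K * (c0 * - deriv \<phi> \<xi>)"
  proof -
    have "d * ?I - d * \<phi> \<xi> + f (\<phi> \<xi>) = c0 * - deriv \<phi> \<xi>"
      using phi_has_deriv(2)[OF \<open>\<xi> < 0\<close>] by linarith
    then show ?thesis by simp
  qed
  also have "\<dots> \<le> K * (deriv \<phi> \<xi> * - k)"
    using mult_right_mono_neg[OF \<open>c0 \<le> k\<close> phi_deriv_nonpos[OF \<open>\<xi> < 0\<close>]] assms(1)
    by (intro mult_left_mono) (simp_all add: algebra_simps)
  finally show ?thesis .
qed

lemma semi_wave_flux_le:
  assumes v: "continuous_on {a..0} v" and le: "\<And>\<xi>. a \<le> \<xi> \<Longrightarrow> \<xi> \<le> 0 \<Longrightarrow> v \<xi> \<le> K * \<phi> \<xi>"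
    and "0 \<le> K"
  shows "\<mu> * integral {a..0} (\<lambda>\<xi>. integral {0..} (\<lambda>y. J (\<xi> - y)) * v \<xi>) \<le> K * c0"
proof -
  define B where "B \<xi> = integral {0..} (\<lambda>y. J (\<xi> - y))" for \<xi>
  have B_nonneg: "0 \<le> B \<xi>" for \<xi>
    unfolding B_def by (rule kernel_J_reflected_integral_nonneg[OF kernel])
  have B: "B absolutely_integrable_on {..0}"
    using tail_integrable B_nonneg unfolding B_def by (intro nonnegative_absolutely_integrable_1) auto
  have B\<phi>: "(\<lambda>\<xi>. B \<xi> * \<phi> \<xi>) absolutely_integrable_on {..0}"
    using absolutely_integrable_bounded_measurable_product_real[OF phi_measurable _ bounded_phi B]
    by (simp add: mult.commute)
  have "(\<lambda>\<xi>. v \<xi> * B \<xi>) absolutely_integrable_on {a..0}"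
    by (intro absolutely_integrable_bounded_measurable_product_real set_integrable_subset[OF B]
        continuous_imp_measurable_on_sets_lebesgue v compact_imp_bounded compact_continuous_image) auto
  then have Bv: "(\<lambda>\<xi>. B \<xi> * v \<xi>) integrable_on {a..0}"
    by (simp add: mult.commute set_lebesgue_integral_eq_integral(1))
  have Kint: "(\<lambda>\<xi>. K * (B \<xi> * \<phi> \<xi>)) integrable_on S" if "S \<in> sets lebesgue" "S \<subseteq> {..0}" for S
    using set_lebesgue_integral_eq_integral(1)[OF set_integrable_subset[OF B\<phi> that]]
    by (rule integrable_on_mult_right)
  have "integral {a..0} (\<lambda>\<xi>. B \<xi> * v \<xi>) \<le> integral {a..0} (\<lambda>\<xi>. K * (B \<xi> * \<phi> \<xi>))"
  proof (rule integral_le[OF Bv Kint])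
    show "B \<xi> * v \<xi> \<le> K * (B \<xi> * \<phi> \<xi>)" if "\<xi> \<in> {a..0}" for \<xi>
      using mult_left_mono[OF le B_nonneg] that by (simp add: algebra_simps)
  qed auto
  also have "\<dots> \<le> integral {..0} (\<lambda>\<xi>. K * (B \<xi> * \<phi> \<xi>))"
  proof (rule integral_subset_le[OF _ Kint Kint])
    show "\<forall>\<xi>\<in>{..0}. 0 \<le> K * (B \<xi> * \<phi> \<xi>)"
      using B_nonneg phi_nonneg \<open>0 \<le> K\<close> by simp
  qed auto
  also have "\<dots> = K * (c0 / \<mu>)"
    using c0_eq \<mu>_pos by (simp add: B_def)
  finally show ?thesis
    using \<mu>_pos by (simp add: B_def field_simps)
qed

end

section \<open>Comparison for the free boundary problem\<close>

locale free_boundary_solution = semi_wave_setting +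
  fixes h0 :: real and u0 :: "real \<Rightarrow> real" and u :: "real \<Rightarrow> real \<Rightarrow> real" and g h :: "real \<Rightarrow> real"
  assumes solution: "solves_P d \<mu> J f h0 u0 u g h"
begin

definition nonlocal_operator :: "real \<Rightarrow> (real \<Rightarrow> real) \<Rightarrow> real \<Rightarrow> real"
  where "nonlocal_operator t v x = d * integral {g t..h t} (\<lambda>y. J (x - y) * v y) - d * v x + f (v x)"

lemma continuous_on_g: "continuous_on {0..} g"
  and continuous_on_h: "continuous_on {0..} h"
  and g_less_h: "0 \<le> t \<Longrightarrow> g t < h t"
  and continuous_on_u: "continuous_on {(t, x). 0 \<le> t \<and> g t \<le> x \<and> x \<le> h t} (\<lambda>(t, x). u t x)"
  and u_deriv: "0 < t \<Longrightarrow> g t < x \<Longrightarrow> x < h t \<Longrightarrow>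
      ((\<lambda>s. u s x) has_real_derivative nonlocal_operator t (u t) x) (at t)"
  and u_boundary: "0 \<le> t \<Longrightarrow> u t (g t) = 0 \<and> u t (h t) = 0"
  and h_deriv: "0 < t \<Longrightarrow> (h has_real_derivative
      \<mu> * integral {g t..h t} (\<lambda>x. integral {h t..} (\<lambda>y. J (x - y)) * u t x)) (at t)"
  using solution unfolding solves_P_def nonlocal_operator_def by auto

lemma continuous_on_g_Icc: "0 \<le> T0 \<Longrightarrow> continuous_on {T0..T1} g"
  and continuous_on_h_Icc: "0 \<le> T0 \<Longrightarrow> continuous_on {T0..T1} h"
  by (auto intro: continuous_on_subset[OF continuous_on_g] continuous_on_subset[OF continuous_on_h])

lemma continuous_on_u_between_graphs:
  "0 \<le> T0 \<Longrightarrow> continuous_on (between_graphs T0 T1 g h) (\<lambda>(t, x). u t x)"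
  by (rule continuous_on_subset[OF continuous_on_u]) (auto simp: between_graphs_def)

lemma between_graphs_bound:
  fixes V :: "real \<Rightarrow> real \<Rightarrow> real"
  assumes "0 \<le> T0" "continuous_on (between_graphs T0 T1 g h) (\<lambda>(t, x). V t x)"
  obtains B where "\<And>t x. (t, x) \<in> between_graphs T0 T1 g h \<Longrightarrow> \<bar>V t x\<bar> \<le> B"
proof -
  have "compact ((\<lambda>(t, x). V t x) ` between_graphs T0 T1 g h)"
    using assms by (intro compact_continuous_image compact_between_graphs continuous_on_g_Icc
        continuous_on_h_Icc)
  then obtain B where "\<forall>z \<in> (\<lambda>(t, x). V t x) ` between_graphs T0 T1 g h. norm z \<le> B"
    using compact_imp_bounded bounded_iff by metis
  then show thesis
    by (intro that[of B]) force
qed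

lemma nonlocal_operator_diff_at_min:
  assumes v: "continuous_on {g t..h t} v" and w: "continuous_on {g t..h t} w"
    and L: "L-lipschitz_on {0..B} f" and "v x \<in> {0..B}" "w x \<in> {0..B}"
    and min: "v x - w x = -a" and above: "\<And>y. y \<in> {g t..h t} \<Longrightarrow> -a \<le> v y - w y" and "0 \<le> a"
  shows "-L * a \<le> nonlocal_operator t v x - nonlocal_operator t w x"
proof -
  define Iv where "Iv = integral {g t..h t} (\<lambda>y. J (x - y) * v y)"
  define Iw where "Iw = integral {g t..h t} (\<lambda>y. J (x - y) * w y)"
  have "-a \<le> Iv - Iw"
    unfolding Iv_def Iw_def using above \<open>0 \<le> a\<close>
    by (intro kernel_J_convolution_Icc_diff_lower_bound[OF kernel v w]) auto
  then have "d * Iw - d * Iv \<le> d * a"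
    using d_pos by (simp flip: right_diff_distrib)
  moreover have "\<bar>f (v x) - f (w x)\<bar> \<le> L * a"
    using lipschitz_onD[OF L assms(4,5)] min \<open>0 \<le> a\<close> by (simp add: dist_real_def)
  moreover have "d * w x = d * v x + d * a"
    using min by (simp flip: distrib_left)
  ultimately show ?thesis
    unfolding nonlocal_operator_def Iv_def[symmetric] Iw_def[symmetric] by linarith
qed

lemma u_le_supersolution:
  assumes "0 \<le> T0"
    and cV: "continuous_on (between_graphs T0 T1 g h) (\<lambda>(t, x). V t x)"
    and V_nonneg: "\<And>t x. (t, x) \<in> between_graphs T0 T1 g h \<Longrightarrow> 0 \<le> V t x"
    and initial: "\<And>x. g T0 \<le> x \<Longrightarrow> x \<le> h T0 \<Longrightarrow> u T0 x \<le> V T0 x"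
    and super: "\<And>t x. T0 < t \<Longrightarrow> t \<le> T1 \<Longrightarrow> g t < x \<Longrightarrow> x < h t \<Longrightarrow>
      \<exists>V'. ((\<lambda>s. V s x) has_real_derivative V') (at t) \<and> nonlocal_operator t (V t) x \<le> V'"
    and tx: "(t, x) \<in> between_graphs T0 T1 g h"
  shows "u t x \<le> V t x"
proof -
  let ?D = "between_graphs T0 T1 g h"
  have cu: "continuous_on ?D (\<lambda>(t, x). u t x)"
    by (rule continuous_on_u_between_graphs[OF \<open>0 \<le> T0\<close>])
  obtain Bu BV where Bu: "\<And>t x. (t, x) \<in> ?D \<Longrightarrow> \<bar>u t x\<bar> \<le> Bu"
    and BV: "\<And>t x. (t, x) \<in> ?D \<Longrightarrow> \<bar>V t x\<bar> \<le> BV"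
    using between_graphs_bound[OF \<open>0 \<le> T0\<close> cu] between_graphs_bound[OF \<open>0 \<le> T0\<close> cV] by metis
  obtain L where L: "L-lipschitz_on {0..max Bu BV} f"
    using cond_f3_lipschitz_on[OF reaction] .
  have "0 \<le> V t x - u t x"
  proof (rule nonneg_between_graphs[OF continuous_on_g_Icc continuous_on_h_Icc _ _ _
        lipschitz_on_nonneg[OF L] _ tx])
    show "continuous_on ?D (\<lambda>(t, x). V t x - u t x)"
      using continuous_on_diff[OF cV cu] by (simp add: case_prod_unfold)
    show "0 \<le> V s (g s) - u s (g s) \<and> 0 \<le> V s (h s) - u s (h s)" if "T0 \<le> s" "s \<le> T1" for s
      using V_nonneg[of s "g s"] V_nonneg[of s "h s"] u_boundary[of s] g_less_h[of s] that \<open>0 \<le> T0\<close>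
      by (simp add: between_graphs_def)
    show "\<exists>w'. ((\<lambda>s. V s y - u s y) has_real_derivative w') (at s) \<and> - L * a \<le> w'"
      if s: "T0 < s" "s \<le> T1" "g s < y" "y < h s" and "0 < a" and min: "V s y - u s y = - a"
        and above: "\<And>z. g s \<le> z \<Longrightarrow> z \<le> h s \<Longrightarrow> - a \<le> V s z - u s z" for s y a
    proof -
      obtain V' where V': "((\<lambda>s. V s y) has_real_derivative V') (at s)" "nonlocal_operator s (V s) y \<le> V'"
        using super[OF s] by blast
      have sy: "(s, y) \<in> ?D"
        using s by (simp add: between_graphs_def)
      have "-L * a \<le> nonlocal_operator s (V s) y - nonlocal_operator s (u s) y"
        using s \<open>0 < a\<close> min above V_nonneg[OF sy] Bu[OF sy] BV[OF sy]
        by (intro nonlocal_operator_diff_at_min[OF continuous_on_between_graphs_slice[OF cV]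
              continuous_on_between_graphs_slice[OF cu] L]) auto
      moreover have "((\<lambda>s. V s y - u s y) has_real_derivative V' - nonlocal_operator s (u s) y) (at s)"
        using s \<open>0 \<le> T0\<close> by (intro DERIV_diff V'(1) u_deriv) auto
      ultimately show ?thesis
        using V'(2) by (intro exI[of _ "V' - nonlocal_operator s (u s) y"]) auto
    qed
  qed (use initial \<open>0 \<le> T0\<close> in auto)
  then show ?thesis by simp
qed

lemma u_le_decaying_supersolution:
  assumes "1 < \<rho>" "0 \<le> M" and M: "\<And>x. g 0 \<le> x \<Longrightarrow> x \<le> h 0 \<Longrightarrow> u 0 x \<le> M"
    and "0 \<le> t" "g t \<le> x" "x \<le> h t"
  shows "u t x \<le> \<rho> + M * exp (f \<rho> / \<rho> * t)"
proof -
  define V where "V s = \<rho> + M * exp (f \<rho> / \<rho> * s)" for s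
  have V_ge: "\<rho> \<le> V s" for s
    using \<open>0 \<le> M\<close> by (simp add: V_def)
  have V': "(V has_real_derivative f \<rho> / \<rho> * (M * exp (f \<rho> / \<rho> * s))) (at s)" for s
    unfolding V_def using \<open>1 < \<rho>\<close> by (auto intro!: derivative_eq_intros)
  have super: "nonlocal_operator s (\<lambda>_. V s) y \<le> f \<rho> / \<rho> * (M * exp (f \<rho> / \<rho> * s))" for s y
  proof -
    have "integral {g s..h s} (\<lambda>z. J (y - z) * V s) \<le> V s"
      using kernel_J_reflected_integral_Icc_le_1[OF kernel, of "g s" "h s" y] V_ge[of s] \<open>1 < \<rho>\<close>
      by (simp add: mult_left_le_one_le)
    then have "d * integral {g s..h s} (\<lambda>z. J (y - z) * V s) \<le> d * V s"
      using d_pos by simp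
    moreover have "f (V s) \<le> f \<rho> / \<rho> * V s"
      using cond_f3_le_linear[OF reaction _ V_ge[of s]] \<open>1 < \<rho>\<close> by (simp add: mult.commute)
    moreover have "f \<rho> / \<rho> * V s \<le> f \<rho> / \<rho> * (M * exp (f \<rho> / \<rho> * s))"
      using cond_f3_neg_above_1[OF reaction \<open>1 < \<rho>\<close>] \<open>1 < \<rho>\<close> by (simp add: V_def algebra_simps)
    ultimately show ?thesis
      unfolding nonlocal_operator_def by linarith
  qed
  have "u t x \<le> V t"
  proof (rule u_le_supersolution[of 0 t "\<lambda>s y. V s"])
    show "continuous_on (between_graphs 0 t g h) (\<lambda>(s, y). V s)"
      unfolding V_def case_prod_unfold by (intro continuous_intros)
    show "0 \<le> V s" for s
      using V_ge[of s] \<open>1 < \<rho>\<close> by simp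
    show "u 0 y \<le> V 0" if "g 0 \<le> y" "y \<le> h 0" for y
      using M[OF that] \<open>1 < \<rho>\<close> by (simp add: V_def)
    show "\<exists>V'. ((\<lambda>s. V s) has_real_derivative V') (at s) \<and> nonlocal_operator s (\<lambda>_. V s) y \<le> V'" for s y
      using V' super by blast
  qed (use assms in \<open>auto simp: between_graphs_def\<close>)
  then show ?thesis
    by (simp add: V_def)
qed

lemma u_eventually_le:
  assumes "1 < \<theta>"
  obtains T where "0 \<le> T" "\<And>t x. T \<le> t \<Longrightarrow> g t \<le> x \<Longrightarrow> x \<le> h t \<Longrightarrow> u t x \<le> \<theta>"
proof -
  define \<rho> where "\<rho> = (1 + \<theta>) / 2"
  have \<rho>: "1 < \<rho>" "\<rho> < \<theta>"
    using assms by (auto simp: \<rho>_def)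
  obtain B where B: "\<And>t x. (t, x) \<in> between_graphs 0 0 g h \<Longrightarrow> \<bar>u t x\<bar> \<le> B"
    using between_graphs_bound[OF order_refl continuous_on_u_between_graphs[OF order_refl]] by blast
  define M where "M = max B 0"
  have M: "0 \<le> M" "\<And>x. g 0 \<le> x \<Longrightarrow> x \<le> h 0 \<Longrightarrow> u 0 x \<le> M"
    using B by (force simp: M_def between_graphs_def)+
  define \<beta> where "\<beta> = - f \<rho> / \<rho>"
  have "0 < \<beta>"
    using cond_f3_neg_above_1[OF reaction \<rho>(1)] \<rho>(1) by (simp add: \<beta>_def divide_neg_pos)
  define T where "T = M / ((\<theta> - \<rho>) * \<beta>)"
  show thesis
  proof (rule that[of T])
    show "0 \<le> T"
      using M(1) \<rho> \<open>0 < \<beta>\<close> by (simp add: T_def)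
    fix t x assume "T \<le> t" "g t \<le> x" "x \<le> h t"
    have "M \<le> (\<theta> - \<rho>) * (\<beta> * t)"
      using \<open>T \<le> t\<close> \<rho> \<open>0 < \<beta>\<close> by (simp add: T_def field_simps)
    also have "\<dots> \<le> (\<theta> - \<rho>) * exp (\<beta> * t)"
      using exp_ge_add_one_self[of "\<beta> * t"] \<rho> by (intro mult_left_mono) linarith+
    finally have "M * exp (f \<rho> / \<rho> * t) \<le> \<theta> - \<rho>"
      by (simp add: \<beta>_def exp_minus field_simps)
    moreover have "u t x \<le> \<rho> + M * exp (f \<rho> / \<rho> * t)"
      using \<open>T \<le> t\<close> \<open>0 \<le> T\<close> \<open>g t \<le> x\<close> \<open>x \<le> h t\<close> by (intro u_le_decaying_supersolution \<rho>(1) M) auto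
    ultimately show "u t x \<le> \<theta>"
      by simp
  qed
qed

lemma nonlocal_operator_shifted_semi_wave_le:
  assumes "1 \<le> K" "c0 \<le> k" "y < h s" "h s \<le> c"
  shows "nonlocal_operator s (\<lambda>z. K * \<phi> (z - c)) y \<le> K * (deriv \<phi> (y - c) * - k)"
proof -
  define P where "P = integral {g s - c..h s - c} (\<lambda>z. J (y - c - z) * \<phi> z)"
  have "integral {g s..h s} (\<lambda>z. J (y - z) * (K * \<phi> (z - c))) = K * P"
    using integral_shift_real_ivl[of "g s" c "h s" "\<lambda>z. J (y - z) * \<phi> (z - c)"]
    by (simp add: P_def algebra_simps)
  moreover have "P \<le> integral {..0} (\<lambda>z. J (y - c - z) * \<phi> z)"
    unfolding P_def using assms(4) by (intro phi_convolution_Icc_le) auto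
  ultimately show ?thesis
    using scaled_semi_wave_supersolution[OF assms(1,2)] assms(3,4)
    by (simp add: nonlocal_operator_def)
qed

lemma u_le_shifted_semi_wave:
  assumes "0 \<le> T" "1 \<le> K" "c0 \<le> k"
    and behind: "\<And>s. T \<le> s \<Longrightarrow> s \<le> t \<Longrightarrow> h s \<le> C + k * s"
    and initial: "\<And>x. g T \<le> x \<Longrightarrow> x \<le> h T \<Longrightarrow> u T x \<le> K * \<phi> (x - (C + k * T))"
    and tx: "T \<le> t" "g t \<le> x" "x \<le> h t"
  shows "u t x \<le> K * \<phi> (x - (C + k * t))"
proof (rule u_le_supersolution[of T t "\<lambda>s y. K * \<phi> (y - (C + k * s))"])
  let ?D = "between_graphs T t g h"
  have ahead: "y - (C + k * s) \<le> 0" if "(s, y) \<in> ?D" for s y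
    using behind[of s] that by (auto simp: between_graphs_def)
  show "continuous_on ?D (\<lambda>(s, y). K * \<phi> (y - (C + k * s)))"
    unfolding case_prod_unfold using ahead
    by (intro continuous_intros continuous_on_compose2[OF continuous_on_phi]) auto
  show "0 \<le> K * \<phi> (y - (C + k * s))" if "(s, y) \<in> ?D" for s y
    using phi_nonneg[OF ahead[OF that]] \<open>1 \<le> K\<close> by simp
  show "\<exists>V'. ((\<lambda>s. K * \<phi> (y - (C + k * s))) has_real_derivative V') (at s) \<and>
      nonlocal_operator s (\<lambda>z. K * \<phi> (z - (C + k * s))) y \<le> V'"
    if s: "T < s" "s \<le> t" "g s < y" "y < h s" for s y
  proof (intro exI conjI)
    have "y - (C + k * s) < 0"
      using behind[of s] s \<open>T \<le> t\<close> by simp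
    moreover have "((\<lambda>\<sigma>. y - (C + k * \<sigma>)) has_real_derivative - k) (at s)"
      by (auto intro!: derivative_eq_intros)
    ultimately have "((\<lambda>\<sigma>. \<phi> (y - (C + k * \<sigma>))) has_real_derivative deriv \<phi> (y - (C + k * s)) * - k) (at s)"
      by (intro DERIV_chain2[OF phi_has_deriv(1)])
    then show "((\<lambda>s. K * \<phi> (y - (C + k * s))) has_real_derivative
        K * (deriv \<phi> (y - (C + k * s)) * - k)) (at s)"
      by (rule DERIV_cmult)
    show "nonlocal_operator s (\<lambda>z. K * \<phi> (z - (C + k * s))) y \<le> K * (deriv \<phi> (y - (C + k * s)) * - k)"
      using behind[of s] s \<open>T \<le> t\<close> by (intro nonlocal_operator_shifted_semi_wave_le assms(2,3)) auto
  qed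
qed (use assms in \<open>auto simp: between_graphs_def\<close>)

lemma h_speed_le:
  assumes "0 \<le> t" "0 \<le> K" and le: "\<And>x. g t \<le> x \<Longrightarrow> x \<le> h t \<Longrightarrow> u t x \<le> K * \<phi> (x - h t)"
  shows "\<mu> * integral {g t..h t} (\<lambda>x. integral {h t..} (\<lambda>y. J (x - y)) * u t x) \<le> K * c0"
proof -
  have tail: "integral {h t..} (\<lambda>y. J (x - y)) = integral {0..} (\<lambda>y. J (x - h t - y))" for x
    by (rule kernel_J_tail_integral_shift[OF kernel])
  have "integral {g t..h t} (\<lambda>x. integral {h t..} (\<lambda>y. J (x - y)) * u t x)
      = integral {g t - h t..0} (\<lambda>\<xi>. integral {0..} (\<lambda>y. J (\<xi> - y)) * u t (\<xi> + h t))"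
    using integral_shift_real_ivl[of "g t" "h t" "h t" "\<lambda>x. integral {h t..} (\<lambda>y. J (x - y)) * u t x"]
    by (simp add: tail)
  also have "\<mu> * \<dots> \<le> K * c0"
  proof (rule semi_wave_flux_le[OF _ _ \<open>0 \<le> K\<close>])
    show "continuous_on {g t - h t..0} (\<lambda>\<xi>. u t (\<xi> + h t))"
      by (intro continuous_on_compose2[OF continuous_on_between_graphs_slice[OF
            continuous_on_u_between_graphs[OF \<open>0 \<le> t\<close>], of t]] continuous_intros) auto
    show "u t (\<xi> + h t) \<le> K * \<phi> \<xi>" if "g t - h t \<le> \<xi>" "\<xi> \<le> 0" for \<xi>
      using le[of "\<xi> + h t"] that by simp
  qed
  finally show ?thesis .
qed

lemma h_stays_below_line:
  assumes "0 \<le> T" "1 \<le> K" "K * c0 < k"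
    and initial: "\<And>x. g T \<le> x \<Longrightarrow> x \<le> h T \<Longrightarrow> u T x \<le> K * \<phi> (x - (C + k * T))"
    and start: "h T < C + k * T" and "T \<le> t"
  shows "h t < C + k * t"
proof -
  have "h t - (C + k * t) < 0"
  proof (rule negative_if_DERIV_negative_at_first_zero[OF _ _ _ \<open>T \<le> t\<close>])
    show "continuous_on {T..} (\<lambda>s. h s - (C + k * s))"
      using \<open>0 \<le> T\<close> by (intro continuous_intros continuous_on_subset[OF continuous_on_h]) auto
    show "h T - (C + k * T) < 0"
      using start by simp
    fix t1 assume "T < t1" and contact: "h t1 - (C + k * t1) = 0"
      and before: "\<And>s. T \<le> s \<Longrightarrow> s < t1 \<Longrightarrow> h s - (C + k * s) < 0"
    have "c0 \<le> K * c0"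
      using mult_right_mono[OF \<open>1 \<le> K\<close>, of c0] c0_pos by simp
    with assms(3) have "c0 \<le> k"
      by linarith
    have "h s \<le> C + k * s" if "T \<le> s" "s \<le> t1" for s
      using before[of s] contact that by (cases "s = t1") auto
    then have "u t1 x \<le> K * \<phi> (x - h t1)" if "g t1 \<le> x" "x \<le> h t1" for x
      using u_le_shifted_semi_wave[OF \<open>0 \<le> T\<close> \<open>1 \<le> K\<close> \<open>c0 \<le> k\<close> _ initial _ that] \<open>T < t1\<close> contact
      by simp
    then have "\<mu> * integral {g t1..h t1} (\<lambda>x. integral {h t1..} (\<lambda>y. J (x - y)) * u t1 x) \<le> K * c0"
      using \<open>0 \<le> T\<close> \<open>T < t1\<close> \<open>1 \<le> K\<close> by (intro h_speed_le) auto
    with assms(3) have "\<mu> * integral {g t1..h t1} (\<lambda>x. integral {h t1..} (\<lambda>y. J (x - y)) * u t1 x) - k < 0"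
      by linarith
    moreover have "((\<lambda>s. h s - (C + k * s)) has_real_derivative
        \<mu> * integral {g t1..h t1} (\<lambda>x. integral {h t1..} (\<lambda>y. J (x - y)) * u t1 x) - k) (at t1)"
      using \<open>0 \<le> T\<close> \<open>T < t1\<close> by (intro DERIV_diff h_deriv) (auto intro!: derivative_eq_intros)
    ultimately show "\<exists>r'. ((\<lambda>s. h s - (C + k * s)) has_real_derivative r') (at t1) \<and> r' < 0"
      by blast
  qed
  then show ?thesis by simp
qed

lemma h_eventually_below_line:
  assumes "1 < \<kappa>"
  obtains T C where "\<And>t. T \<le> t \<Longrightarrow> h t < C + \<kappa> * c0 * t"
proof -
  define K where "K = (1 + \<kappa>) / 2"
  have K: "1 < K" "K * c0 < \<kappa> * c0"
    using assms c0_pos by (auto simp: K_def)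
  obtain T where T: "0 \<le> T" "\<And>t x. T \<le> t \<Longrightarrow> g t \<le> x \<Longrightarrow> x \<le> h t \<Longrightarrow> u t x \<le> (1 + K) / 2"
    using u_eventually_le[of "(1 + K) / 2"] K by auto
  have "(1 + K) / 2 / K < 1"
    using K by (simp add: field_simps)
  then obtain N where N: "\<And>y. y \<le> N \<Longrightarrow> (1 + K) / 2 / K < \<phi> y"
    using order_tendstoD(1)[OF phi_tendsto_1] by (auto simp: eventually_at_bot_linorder)
  define C where "C = h T - min N 0 + 1 - \<kappa> * c0 * T"
  have initial: "u T x \<le> K * \<phi> (x - (C + \<kappa> * c0 * T))" if "g T \<le> x" "x \<le> h T" for x
  proof -
    have "(1 + K) / 2 / K < \<phi> (x - (C + \<kappa> * c0 * T))"
      using that by (intro N) (simp add: C_def)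
    then have "(1 + K) / 2 < K * \<phi> (x - (C + \<kappa> * c0 * T))"
      using K by (simp add: field_simps)
    then show ?thesis
      using T(2)[of T x] that by simp
  qed
  have "h T < C + \<kappa> * c0 * T"
    by (simp add: C_def)
  with K have "h t < C + \<kappa> * c0 * t" if "T \<le> t" for t
    using h_stays_below_line[OF T(1) _ _ initial _ that] by simp
  then show thesis
    by (rule that)
qed

end

lemma Limsup_ratio_le_of_eventually_le:
  fixes p :: "real \<Rightarrow> real"
  assumes "eventually (\<lambda>t. p t \<le> C + k * t) at_top"
  shows "Limsup at_top (\<lambda>t. ereal (p t / t)) \<le> ereal k"
proof -
  have "eventually (\<lambda>t. ereal (p t / t) \<le> ereal (C / t + k)) at_top"
    using assms eventually_gt_at_top[of 0] by eventually_elim (simp add: field_simps)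
  then have "Limsup at_top (\<lambda>t. ereal (p t / t)) \<le> Limsup at_top (\<lambda>t. ereal (C / t + k))"
    by (rule Limsup_mono)
  also have "\<dots> = ereal k"
  proof (rule lim_imp_Limsup)
    have "((\<lambda>t. C / t + k) \<longlongrightarrow> 0 + k) at_top"
      by (intro tendsto_add tendsto_const tendsto_divide_0[OF tendsto_const]
          filterlim_at_top_imp_at_infinity[OF filterlim_ident])
    then show "((\<lambda>t. ereal (C / t + k)) \<longlongrightarrow> ereal k) at_top"
      by (simp add: lim_ereal)
  qed simp
  finally show ?thesis .
qed

theorem lemma3p1:
  fixes d \<mu> h0 c0 :: real and J f u0 \<phi> g h :: "real \<Rightarrow> real" and u :: "real \<Rightarrow> real \<Rightarrow> real"
  assumes "d > 0" "\<mu> > 0" "h0 > 0"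
    and "kernel_J J"
    and "(\<lambda>x. integral {0..} (\<lambda>y. J (x - y))) integrable_on {..0}"
    and "cond_f3 f"
    and "semi_wave d \<mu> J f c0 \<phi>"
    and "init_data h0 u0"
    and "solves_P d \<mu> J f h0 u0 u g h"
    and "spreading u g h"
  shows "Limsup at_top (\<lambda>t. ereal (h t / t)) \<le> ereal c0"
proof -
  interpret free_boundary_solution d \<mu> c0 J f \<phi> h0 u0 u g h
    using assms by unfold_locales auto
  show ?thesis
  proof (rule ereal_le_epsilon2)
    fix e :: real
    assume "0 < e"
    then obtain T C where "\<And>t. T \<le> t \<Longrightarrow> h t < C + (1 + e / c0) * c0 * t"
      using h_eventually_below_line[of "1 + e / c0"] c0_pos by auto
    then have "eventually (\<lambda>t. h t \<le> C + (c0 + e) * t) at_top"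
      using c0_pos unfolding eventually_at_top_linorder by (force simp: algebra_simps)
    then show "Limsup at_top (\<lambda>t. ereal (h t / t)) \<le> ereal c0 + ereal e"
      using Limsup_ratio_le_of_eventually_le by simp
  qed
qed

end
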